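(* For every metric space $(X,d_X)$ with finite asymptotic dimension there exists a metric $d_X'$ on $X$ such that the identity $(X,d_X)\to(X,d_X')$ is a coarse equivalence, $\operatorname{asdim}_{AN}(X,d_X')=\operatorname{asdim}(X,d_X)$, and every asymptotic cone of $(X,d_X')$ is an ultrametric space. Moreover, if $X$ is a countable group and $d_X$ is a proper left invariant metric, then $d_X'$ can be taken to be a proper left invariant metric.
   Context: An $s$-scale chain ($s>0$) is a finite sequence $x_0,\dots,x_m$ with $d(x_i,x_{i+1})<s$; $s$-scale connected components of a subset $U$ are classes of "joined by an $s$-scale chain inside $U$". A nondecreasing $D\colon\mathbb{R}_+\to\mathbb{R}_+$ is an $n$-dimensional control function if for each $s>0$ there is a cover $\{\mathcal U_0,\dots,\mathcal U_n\}$ of $X$ whose members have $s$-scale components of diameter $\le D(s)$. $\operatorname{asdim}(X)\le n$ if some $n$-dimensional control function exists; $\operatorname{asdim}_{AN}(X)\le n$ if one of the form $Cs+k$ ($C>0,k\in\mathbb{R}$) exists. A map $f$ is a coarse embedding if $\rho_-(d(x,y))\le d(f(x),f(y))\le\rho_+(d(x,y))$ for nondecreasing $\rho_\pm$ with $\rho_-\to\infty$; it is a coarse equivalence if moreover its image is $K$-dense for some $K$. A metric $d_G$ on a group $G$ is proper left invariant if $d_G(gh,gk)=d_G(h,k)$ for all $g,h,k$ and every ball is finite. Asymptotic cones $\operatorname{Cone}_\omega(X,c,d)$: for a non-principal ultrafilter $\omega$ on $\mathbb{N}$, a sequence $c$ in $X$ and positive reals $d_n$ with $\lim_\omega d_n=\infty$,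 the set of sequences $(x_n)$ with $\lim_\omega d(x_n,c_n)/d_n<\infty$ with pseudometric $\lim_\omega d(x_n,y_n)/d_n$, modulo distance zero. Ultrametric: $d(x,y)\le\max\{d(x,z),d(y,z)\}$. *)

theory Defs
  imports Complex_Main "HOL-Algebra.Group" "HOL-Library.Extended_Nat"
begin

definition metric_on :: "'a set \<Rightarrow> ('a \<Rightarrow> 'a \<Rightarrow> real) \<Rightarrow> bool" where
  "metric_on X d \<longleftrightarrow>
     (\<forall>x\<in>X. \<forall>y\<in>X. 0 \<le> d x y \<and> (d x y = 0 \<longleftrightarrow> x = y) \<and> d x y = d y x) \<and>
     (\<forall>x\<in>X. \<forall>y\<in>X. \<forall>z\<in>X. d x z \<le> d x y + d y z)"

definition s_chain_joined ::
  "('a \<Rightarrow> 'a \<Rightarrow> real) \<Rightarrow> real \<Rightarrow> 'a set \<Rightarrow> 'a \<Rightarrow> 'a \<Rightarrow> bool" where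
  "s_chain_joined d s U x y \<longleftrightarrow>
     (\<exists>xs. xs \<noteq> [] \<and> hd xs = x \<and> last xs = y \<and> set xs \<subseteq> U \<and>
           (\<forall>i. Suc i < length xs \<longrightarrow> d (xs ! i) (xs ! Suc i) < s))"

definition s_component ::
  "('a \<Rightarrow> 'a \<Rightarrow> real) \<Rightarrow> real \<Rightarrow> 'a set \<Rightarrow> 'a \<Rightarrow> 'a set" where
  "s_component d s U x = {y. s_chain_joined d s U x y}"

definition s_components ::
  "('a \<Rightarrow> 'a \<Rightarrow> real) \<Rightarrow> real \<Rightarrow> 'a set \<Rightarrow> 'a set set" where
  "s_components d s U = s_component d s U ` U"

definition diam_le :: "('a \<Rightarrow> 'a \<Rightarrow> real) \<Rightarrow> 'a set \<Rightarrow> real \<Rightarrow> bool" where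
  "diam_le d A r \<longleftrightarrow> (\<forall>x\<in>A. \<forall>y\<in>A. d x y \<le> r)"

definition control_function ::
  "'a set \<Rightarrow> ('a \<Rightarrow> 'a \<Rightarrow> real) \<Rightarrow> nat \<Rightarrow> (real \<Rightarrow> real) \<Rightarrow> bool" where
  "control_function X d n D \<longleftrightarrow>
     mono_on {0<..} D \<and> (\<forall>s>0. 0 \<le> D s) \<and>
     (\<forall>s>0. \<exists>U :: nat \<Rightarrow> 'a set.
        (\<forall>i\<le>n. U i \<subseteq> X) \<and> X \<subseteq> (\<Union>i\<le>n. U i) \<and>
        (\<forall>i\<le>n. \<forall>C\<in>s_components d s (U i). diam_le d C (D s)))"

definition asdim_le :: "'a set \<Rightarrow> ('a \<Rightarrow> 'a \<Rightarrow> real) \<Rightarrow> nat \<Rightarrow> bool" where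
  "asdim_le X d n \<longleftrightarrow> (\<exists>D. control_function X d n D)"

definition asdim_AN_le :: "'a set \<Rightarrow> ('a \<Rightarrow> 'a \<Rightarrow> real) \<Rightarrow> nat \<Rightarrow> bool" where
  "asdim_AN_le X d n \<longleftrightarrow>
     (\<exists>C k. C > 0 \<and> control_function X d n (\<lambda>s. C * s + k))"

definition asdim :: "'a set \<Rightarrow> ('a \<Rightarrow> 'a \<Rightarrow> real) \<Rightarrow> enat" where
  "asdim X d = (if \<exists>n. asdim_le X d n then enat (LEAST n. asdim_le X d n) else \<infinity>)"

definition asdim_AN :: "'a set \<Rightarrow> ('a \<Rightarrow> 'a \<Rightarrow> real) \<Rightarrow> enat" where
  "asdim_AN X d = (if \<exists>n. asdim_AN_le X d n then enat (LEAST n. asdim_AN_le X d n) else \<infinity>)"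

definition coarse_embedding ::
  "'a set \<Rightarrow> ('a \<Rightarrow> 'a \<Rightarrow> real) \<Rightarrow> 'b set \<Rightarrow> ('b \<Rightarrow> 'b \<Rightarrow> real) \<Rightarrow> ('a \<Rightarrow> 'b) \<Rightarrow> bool" where
  "coarse_embedding X dX Y dY f \<longleftrightarrow> f ` X \<subseteq> Y \<and>
     (\<exists>\<rho>m \<rho>p :: real \<Rightarrow> real. mono_on {0..} \<rho>m \<and> mono_on {0..} \<rho>p \<and>
        filterlim \<rho>m at_top at_top \<and>
        (\<forall>x\<in>X. \<forall>y\<in>X. \<rho>m (dX x y) \<le> dY (f x) (f y) \<and> dY (f x) (f y) \<le> \<rho>p (dX x y)))"

definition coarse_equivalence ::
  "'a set \<Rightarrow> ('a \<Rightarrow> 'a \<Rightarrow> real) \<Rightarrow> 'b set \<Rightarrow> ('b \<Rightarrow> 'b \<Rightarrow> real) \<Rightarrow> ('a \<Rightarrow> 'b) \<Rightarrow> bool" where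
  "coarse_equivalence X dX Y dY f \<longleftrightarrow> coarse_embedding X dX Y dY f \<and>
     (\<exists>K. \<forall>y\<in>Y. \<exists>x\<in>X. dY (f x) y \<le> K)"

definition nonprincipal_ultrafilter :: "nat filter \<Rightarrow> bool" where
  "nonprincipal_ultrafilter \<omega> \<longleftrightarrow> \<omega> \<noteq> bot \<and>
     (\<forall>P. eventually P \<omega> \<or> eventually (\<lambda>n. \<not> P n) \<omega>) \<and> \<omega> \<le> cofinite"

text \<open>Points of Cone_omega(X,c,d): sequences in X with bounded (hence finite) omega-limit
  of d(x_n,c_n)/d_n.\<close>
definition cone_points ::
  "'a set \<Rightarrow> ('a \<Rightarrow> 'a \<Rightarrow> real) \<Rightarrow> nat filter \<Rightarrow> (nat \<Rightarrow> 'a) \<Rightarrow> (nat \<Rightarrow> real) \<Rightarrow> (nat \<Rightarrow> 'a) set" where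
  "cone_points X d \<omega> c s = {x. (\<forall>n. x n \<in> X) \<and>
      (\<exists>B. eventually (\<lambda>n. d (x n) (c n) / s n \<le> B) \<omega>)}"

definition cone_pdist ::
  "('a \<Rightarrow> 'a \<Rightarrow> real) \<Rightarrow> nat filter \<Rightarrow> (nat \<Rightarrow> real) \<Rightarrow> (nat \<Rightarrow> 'a) \<Rightarrow> (nat \<Rightarrow> 'a) \<Rightarrow> real" where
  "cone_pdist d \<omega> s x y = Lim \<omega> (\<lambda>n. d (x n) (y n) / s n)"

text \<open>The cone (quotient by distance zero) is ultrametric; the ultrametric inequality for
  the quotient metric is the same as for the pseudometric on representatives.\<close>
definition cone_ultrametric ::
  "'a set \<Rightarrow> ('a \<Rightarrow> 'a \<Rightarrow> real) \<Rightarrow> nat filter \<Rightarrow> (nat \<Rightarrow> 'a) \<Rightarrow> (nat \<Rightarrow> real) \<Rightarrow> bool" where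
  "cone_ultrametric X d \<omega> c s \<longleftrightarrow>
     (\<forall>x\<in>cone_points X d \<omega> c s. \<forall>y\<in>cone_points X d \<omega> c s. \<forall>z\<in>cone_points X d \<omega> c s.
        cone_pdist d \<omega> s x y \<le> max (cone_pdist d \<omega> s x z) (cone_pdist d \<omega> s y z))"

definition all_cones_ultrametric :: "'a set \<Rightarrow> ('a \<Rightarrow> 'a \<Rightarrow> real) \<Rightarrow> bool" where
  "all_cones_ultrametric X d \<longleftrightarrow>
     (\<forall>\<omega> c s. nonprincipal_ultrafilter \<omega> \<and> (\<forall>n. c n \<in> X) \<and> (\<forall>n. s n > 0) \<and>
        filterlim s at_top \<omega> \<longrightarrow> cone_ultrametric X d \<omega> c s)"

definition proper_left_invariant_metric ::
  "('b, 'c) monoid_scheme \<Rightarrow> ('b \<Rightarrow> 'b \<Rightarrow> real) \<Rightarrow> bool" where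
  "proper_left_invariant_metric G d \<longleftrightarrow> metric_on (carrier G) d \<and>
     (\<forall>g\<in>carrier G. \<forall>h\<in>carrier G. \<forall>k\<in>carrier G. d (g \<otimes>\<^bsub>G\<^esub> h) (g \<otimes>\<^bsub>G\<^esub> k) = d h k) \<and>
     (\<forall>x\<in>carrier G. \<forall>r. finite {y\<in>carrier G. d x y \<le> r})"

end

theory Submission
  imports Defs "HOL-Analysis.Analysis"
begin

(* Let n = asdim(X,d) with n-dimensional control function D.  Choose a scale
   sequence 1 = T 0 < T 1 < ... with T (i+1) \<ge> 2 T i and T (i+1) > D (T i), and replace
   d by d' = g \<circ> d, where the gauge g sends 0 to 0 and t > 0 to 1 + (least i with t < T i).
   Then:
   - g is monotone, subadditive, unbounded and vanishes only at 0, so d' is a metric, the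
     identity is a coarse equivalence, and left invariance and properness are preserved;
   - g (2t) \<le> g t + 1, hence d'(x,y) \<le> max (d'(x,z)) (d'(y,z)) + 1; this additive defect
     disappears after rescaling by s_n \<rightarrow> \<infinity>, so every asymptotic cone is ultrametric;
   - a d-cover at scale T m has d-components of diameter \<le> D (T m) < T (m+1), i.e. of
     d'-diameter \<le> m + 2, so s \<mapsto> s + 3 is a linear control function for d'; conversely
     every linear control function for d' yields one for d, so asdim_AN d' = asdim d. *)

lemma metric_onD:
  assumes "metric_on X d" and "x \<in> X" and "y \<in> X"
  shows "0 \<le> d x y" and "d x y = 0 \<longleftrightarrow> x = y" and "d x y = d y x"
  using assms unfolding metric_on_def by blast+

lemma metric_on_triangle:
  assumes "metric_on X d" and "x \<in> X" and "y \<in> X" and "z \<in> X"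
  shows "d x z \<le> d x y + d y z"
  using assms unfolding metric_on_def by blast

section \<open>Scale sequences and the associated gauge\<close>

definition scale_sequence :: "(nat \<Rightarrow> real) \<Rightarrow> bool" where
  "scale_sequence T \<longleftrightarrow> T 0 = 1 \<and> (\<forall>i. 2 * T i \<le> T (Suc i))"

definition scale_index :: "(nat \<Rightarrow> real) \<Rightarrow> real \<Rightarrow> nat" where
  "scale_index T t = (LEAST i. t < T i)"

definition scale_gauge :: "(nat \<Rightarrow> real) \<Rightarrow> real \<Rightarrow> real" where
  "scale_gauge T t = (if t \<le> 0 then 0 else 1 + real (scale_index T t))"

lemma scale_sequence_ge_pow:
  assumes "scale_sequence T" shows "2 ^ i \<le> T i"
proof (induction i)
  case 0 then show ?case using assms by (simp add: scale_sequence_def)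
next
  case (Suc i)
  then have "2 * 2 ^ i \<le> 2 * T i" by simp
  also have "\<dots> \<le> T (Suc i)" using assms unfolding scale_sequence_def by blast
  finally show ?case by simp
qed

lemma scale_sequence_pos:
  assumes "scale_sequence T" shows "0 < T i"
  using order_less_le_trans[OF zero_less_power scale_sequence_ge_pow[OF assms]] by simp

lemma scale_sequence_mono:
  assumes T: "scale_sequence T" and "i \<le> j" shows "T i \<le> T j"
proof -
  have "T k \<le> T (Suc k)" for k
    using T scale_sequence_pos[OF T, of k] unfolding scale_sequence_def
    by (smt (verit) mult_2)
  then show ?thesis using assms(2) by (rule lift_Suc_mono_le)
qed

text \<open>Every real number lies below some scale, so the index is well defined.\<close>
lemma scale_index_lt:
  assumes T: "scale_sequence T" shows "t < T (scale_index T t)"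
proof -
  obtain i where "t < 2 ^ i" using real_arch_pow[of 2 t] by auto
  then have "\<exists>i. t < T i" using scale_sequence_ge_pow[OF T, of i] by (meson order_less_le_trans)
  then show ?thesis unfolding scale_index_def by (rule LeastI_ex)
qed

lemma scale_index_le: "t < T i \<Longrightarrow> scale_index T t \<le> i"
  unfolding scale_index_def by (rule Least_le)

lemma scale_index_mono: "scale_sequence T \<Longrightarrow> t \<le> t' \<Longrightarrow> scale_index T t \<le> scale_index T t'"
  by (meson scale_index_le scale_index_lt order_le_less_trans)

lemma scale_index_double:
  assumes T: "scale_sequence T" shows "scale_index T (2 * t) \<le> scale_index T t + 1"
proof -
  have "2 * t < 2 * T (scale_index T t)" using scale_index_lt[OF T, of t] by simp
  also have "\<dots> \<le> T (Suc (scale_index T t))" using T unfolding scale_sequence_def by blast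
  finally show ?thesis using scale_index_le by fastforce
qed

lemma scale_gauge_nonneg: "0 \<le> scale_gauge T t"
  by (simp add: scale_gauge_def)

lemma scale_gauge_le_index: "scale_gauge T t \<le> 1 + real (scale_index T t)"
  by (simp add: scale_gauge_def)

lemma scale_gauge_eq_0_iff: "0 \<le> t \<Longrightarrow> scale_gauge T t = 0 \<longleftrightarrow> t = 0"
  by (simp add: scale_gauge_def)

lemma scale_gauge_mono:
  assumes "scale_sequence T" and "t \<le> t'" shows "scale_gauge T t \<le> scale_gauge T t'"
  using scale_index_mono[OF assms] assms(2) by (simp add: scale_gauge_def)

lemma scale_gauge_max:
  "scale_sequence T \<Longrightarrow> scale_gauge T (max p q) = max (scale_gauge T p) (scale_gauge T q)"
  by (metis max.absorb_iff2 max_def scale_gauge_mono nle_le)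

lemma scale_gauge_double:
  assumes "scale_sequence T" and "0 \<le> t" shows "scale_gauge T (2 * t) \<le> scale_gauge T t + 1"
  using scale_index_double[OF assms(1), of t] assms(2) by (simp add: scale_gauge_def)

lemma scale_gauge_subadditive:
  assumes T: "scale_sequence T" and "0 \<le> a" "0 \<le> b"
  shows "scale_gauge T (a + b) \<le> scale_gauge T a + scale_gauge T b"
proof (cases "a = 0 \<or> b = 0")
  case True then show ?thesis using scale_gauge_nonneg[of T] by auto
next
  case False
  then have "0 < max a b" "0 < min a b" using assms by auto
  have "scale_gauge T (a + b) \<le> scale_gauge T (2 * max a b)"
    using scale_gauge_mono[OF T] by simp
  also have "\<dots> \<le> scale_gauge T (max a b) + 1"
    using scale_gauge_double[OF T] \<open>0 < max a b\<close> by simp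
  also have "\<dots> \<le> scale_gauge T a + scale_gauge T b"
    using \<open>0 < min a b\<close> scale_gauge_max[OF T, of a b] by (auto simp: scale_gauge_def max_def)
  finally show ?thesis .
qed

lemma scale_gauge_bound:
  assumes T: "scale_sequence T" and "scale_gauge T t \<le> M" shows "t < T (nat \<lceil>M\<rceil>)"
proof -
  have "real (scale_index T t) \<le> M"
    using assms(2) scale_index_le[of t T 0] T by (auto simp: scale_gauge_def scale_sequence_def split: if_splits)
  then have "T (scale_index T t) \<le> T (nat \<lceil>M\<rceil>)"
    by (intro scale_sequence_mono[OF T]) linarith
  then show ?thesis using scale_index_lt[OF T, of t] by linarith
qed

lemma scale_gauge_tendsto_at_top:
  assumes T: "scale_sequence T" shows "filterlim (scale_gauge T) at_top at_top"
  unfolding filterlim_at_top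
proof
  fix Z :: real
  have large: "Z \<le> scale_gauge T t" if "T (nat \<lceil>Z\<rceil>) \<le> t" for t
    using scale_gauge_bound[OF T, of t Z] that by fastforce
  show "\<forall>\<^sub>F t in at_top. Z \<le> scale_gauge T t"
    using eventually_ge_at_top[of "T (nat \<lceil>Z\<rceil>)"] by (rule eventually_mono) (rule large)
qed

lemma scale_sequence_outrunning:
  fixes D :: "real \<Rightarrow> real"
  shows "\<exists>T. scale_sequence T \<and> (\<forall>i. D (T i) < T (Suc i))"
proof -
  define T where "T = rec_nat (1::real) (\<lambda>_ t. max (2 * t) (D t + 1))"
  have "T 0 = 1" and TS: "\<And>i. T (Suc i) = max (2 * T i) (D (T i) + 1)"
    unfolding T_def by simp_all
  then show ?thesis unfolding scale_sequence_def by (intro exI[of _ T]) auto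
qed

section \<open>Transfer of control functions between comparable metrics\<close>

lemma s_chain_joined_transfer:
  assumes "s_chain_joined d s U x y" and "\<forall>a\<in>U. \<forall>b\<in>U. d a b < s \<longrightarrow> e a b < s'"
  shows "s_chain_joined e s' U x y"
proof -
  obtain xs where xs: "xs \<noteq> []" "hd xs = x" "last xs = y" "set xs \<subseteq> U"
    and steps: "\<forall>i. Suc i < length xs \<longrightarrow> d (xs ! i) (xs ! Suc i) < s"
    using assms(1) unfolding s_chain_joined_def by blast
  have "\<forall>i. Suc i < length xs \<longrightarrow> e (xs ! i) (xs ! Suc i) < s'"
  proof (intro allI impI)
    fix i assume i: "Suc i < length xs"
    then have "xs ! i \<in> U" "xs ! Suc i \<in> U" using xs(4) nth_mem[of _ xs] by auto
    then show "e (xs ! i) (xs ! Suc i) < s'" using steps assms(2) i by blast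
  qed
  then show ?thesis using xs unfolding s_chain_joined_def by blast
qed

lemma s_component_subset: "s_component d s U x \<subseteq> U"
  unfolding s_component_def s_chain_joined_def by (auto dest!: last_in_set)

lemma s_component_transfer:
  assumes "C \<in> s_components d s U" and "\<forall>a\<in>U. \<forall>b\<in>U. d a b < s \<longrightarrow> e a b < s'"
  shows "\<exists>C'\<in>s_components e s' U. C \<subseteq> C'"
proof -
  obtain x where "x \<in> U" and C: "C = s_component d s U x"
    using assms(1) unfolding s_components_def by blast
  then have "s_component e s' U x \<in> s_components e s' U" unfolding s_components_def by blast
  moreover have "C \<subseteq> s_component e s' U x"
    using s_chain_joined_transfer[OF _ assms(2)] unfolding C s_component_def by blast
  ultimately show ?thesis by blast
qed

text \<open>Control functions transfer along a two-sided comparison of metrics: if e-scale s is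
  dominated by some d-scale s' and d-distances up to D s' are e-distances up to E s, then the
  covers witnessing D witness E.\<close>
lemma control_function_transfer:
  assumes D: "control_function X d n D"
    and E: "mono_on {0<..} E" "\<forall>s>0. 0 \<le> E s"
    and compare: "\<And>s. 0 < s \<Longrightarrow> \<exists>s'>0. (\<forall>a\<in>X. \<forall>b\<in>X. e a b < s \<longrightarrow> d a b < s') \<and>
                                          (\<forall>a\<in>X. \<forall>b\<in>X. d a b \<le> D s' \<longrightarrow> e a b \<le> E s)"
  shows "control_function X e n E"
  unfolding control_function_def
proof (intro conjI E(1) E(2) allI impI)
  fix s :: real assume "0 < s"
  then obtain s' where "0 < s'"
    and small: "\<forall>a\<in>X. \<forall>b\<in>X. e a b < s \<longrightarrow> d a b < s'"
    and diam: "\<forall>a\<in>X. \<forall>b\<in>X. d a b \<le> D s' \<longrightarrow> e a b \<le> E s"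
    using compare by blast
  then obtain U where U: "\<forall>i\<le>n. U i \<subseteq> X" "X \<subseteq> (\<Union>i\<le>n. U i)"
    and UD: "\<forall>i\<le>n. \<forall>C\<in>s_components d s' (U i). diam_le d C (D s')"
    using D unfolding control_function_def by blast
  have "diam_le e C (E s)" if i: "i \<le> n" and C: "C \<in> s_components e s (U i)" for i C
  proof -
    have "U i \<subseteq> X" using U(1) i by blast
    then have "\<forall>a\<in>U i. \<forall>b\<in>U i. e a b < s \<longrightarrow> d a b < s'" using small by blast
    then obtain C' where C': "C' \<in> s_components d s' (U i)" "C \<subseteq> C'"
      using s_component_transfer[OF C] by blast
    have "diam_le d C' (D s')" using UD i C'(1) by blast
    obtain x where "C = s_component e s (U i) x" using C unfolding s_components_def by blast
    then have "C \<subseteq> X" using s_component_subset[of e s "U i" x] \<open>U i \<subseteq> X\<close> by simp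
    with \<open>diam_le d C' (D s')\<close> show ?thesis
      using diam C'(2) unfolding diam_le_def by (meson subsetD)
  qed
  then show "\<exists>U. (\<forall>i\<le>n. U i \<subseteq> X) \<and> X \<subseteq> (\<Union>i\<le>n. U i) \<and>
             (\<forall>i\<le>n. \<forall>C\<in>s_components e s (U i). diam_le e C (E s))"
    using U by blast
qed

lemma asdim_finite_witness:
  assumes "asdim X d < \<infinity>"
  obtains n D where "asdim X d = enat n" "control_function X d n D"
proof -
  have ex: "\<exists>n. asdim_le X d n" using assms unfolding asdim_def by (auto split: if_splits)
  then have "asdim_le X d (LEAST n. asdim_le X d n)" by (rule LeastI_ex)
  then show ?thesis using that ex unfolding asdim_le_def asdim_def by auto
qed

lemma asdim_AN_eq_asdim:
  assumes "asdim X d = enat n" and "asdim_AN_le X e n"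
    and "\<And>m. asdim_AN_le X e m \<Longrightarrow> asdim_le X d m"
  shows "asdim_AN X e = asdim X d"
proof -
  have "(LEAST m. asdim_AN_le X e m) = n"
  proof (rule Least_equality)
    fix m assume "asdim_AN_le X e m"
    then have "asdim_le X d m" using assms(3) by blast
    moreover have "n = (LEAST n. asdim_le X d n)"
      using assms(1) by (auto simp: asdim_def split: if_splits)
    ultimately show "n \<le> m" by (simp add: Least_le)
  qed (rule assms(2))
  then show ?thesis using assms(1,2) unfolding asdim_AN_def by auto
qed

section \<open>Asymptotic cones of coarsely ultrametric metrics\<close>

definition coarse_ultrametric :: "'a set \<Rightarrow> ('a \<Rightarrow> 'a \<Rightarrow> real) \<Rightarrow> real \<Rightarrow> bool" where
  "coarse_ultrametric X e K \<longleftrightarrow> (\<forall>x\<in>X. \<forall>y\<in>X. \<forall>z\<in>X. e x y \<le> max (e x z) (e y z) + K)"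

text \<open>Along an ultrafilter every bounded real sequence converges (compactness of intervals).\<close>
lemma ultrafilter_bounded_convergent:
  fixes u :: "nat \<Rightarrow> real"
  assumes \<omega>: "nonprincipal_ultrafilter \<omega>" and bounded: "eventually (\<lambda>n. u n \<in> {a..b}) \<omega>"
  shows "\<exists>L. (u \<longlongrightarrow> L) \<omega>"
proof -
  let ?F = "filtermap u \<omega>"
  have "?F \<noteq> bot" using \<omega> unfolding nonprincipal_ultrafilter_def by (simp add: filtermap_bot_iff)
  moreover have "eventually (\<lambda>x. x \<in> {a..b}) ?F" using bounded by (simp add: eventually_filtermap)
  ultimately obtain L where L: "inf (nhds L) ?F \<noteq> bot"
    using compact_filter[THEN iffD1, OF compact_Icc[of a b], rule_format, of ?F] by blast
  have "(u \<longlongrightarrow> L) \<omega>" unfolding tendsto_def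
  proof (intro allI impI)
    fix S :: "real set" assume "open S" "L \<in> S"
    show "eventually (\<lambda>n. u n \<in> S) \<omega>"
    proof (rule ccontr)
      assume "\<not> eventually (\<lambda>n. u n \<in> S) \<omega>"
      then have "eventually (\<lambda>n. u n \<notin> S) \<omega>"
        using \<omega> unfolding nonprincipal_ultrafilter_def by blast
      then have "eventually (\<lambda>y. y \<notin> S) ?F" by (simp add: eventually_filtermap)
      moreover have "eventually (\<lambda>y. y \<in> S) (nhds L)"
        using \<open>open S\<close> \<open>L \<in> S\<close> eventually_nhds by blast
      ultimately have "eventually (\<lambda>y. False) (inf (nhds L) ?F)" unfolding eventually_inf by blast
      then show False using L by (simp add: eventually_False)
    qed
  qed
  then show ?thesis by blast
qed

text \<open>Rescaled distances between points of a cone are bounded, hence converge.\<close>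
lemma cone_distance_convergent:
  assumes e: "metric_on X e" and \<omega>: "nonprincipal_ultrafilter \<omega>"
    and c: "\<forall>n. c n \<in> X" and s: "\<forall>n. 0 < s n"
    and x: "x \<in> cone_points X e \<omega> c s" and y: "y \<in> cone_points X e \<omega> c s"
  shows "\<exists>L. ((\<lambda>n. e (x n) (y n) / s n) \<longlongrightarrow> L) \<omega>"
proof -
  obtain Bx By where Bx: "eventually (\<lambda>n. e (x n) (c n) / s n \<le> Bx) \<omega>"
    and By: "eventually (\<lambda>n. e (y n) (c n) / s n \<le> By) \<omega>"
    and X: "\<forall>n. x n \<in> X" "\<forall>n. y n \<in> X"
    using x y unfolding cone_points_def by blast
  have bound: "e (x n) (y n) / s n \<in> {0..Bx + By}"
    if "e (x n) (c n) / s n \<le> Bx \<and> e (y n) (c n) / s n \<le> By" for n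
  proof -
    have sn: "0 < s n" using s by blast
    have "e (x n) (y n) \<le> e (x n) (c n) + e (c n) (y n)" "e (c n) (y n) = e (y n) (c n)"
      "0 \<le> e (x n) (y n)"
      using metric_on_triangle[OF e, of "x n" "c n" "y n"] metric_onD(3)[OF e, of "c n" "y n"]
        metric_onD(1)[OF e, of "x n" "y n"] X c by simp_all
    then have "e (x n) (y n) / s n \<le> (e (x n) (c n) + e (y n) (c n)) / s n"
      using sn by (simp add: divide_right_mono)
    then show ?thesis
      using that sn \<open>0 \<le> e (x n) (y n)\<close> by (simp add: add_divide_distrib)
  qed
  have "eventually (\<lambda>n. e (x n) (y n) / s n \<in> {0..Bx + By}) \<omega>"
    using eventually_conj[OF Bx By] by (rule eventually_mono) (rule bound)
  then show ?thesis by (rule ultrafilter_bounded_convergent[OF \<omega>])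
qed

text \<open>The additive defect K vanishes after rescaling, so all cones are ultrametric.\<close>
lemma coarse_ultrametric_cones:
  assumes e: "metric_on X e" and ultra: "coarse_ultrametric X e K"
  shows "all_cones_ultrametric X e"
  unfolding all_cones_ultrametric_def cone_ultrametric_def cone_pdist_def
proof (intro allI impI ballI)
  fix \<omega> c s x y z
  assume H: "nonprincipal_ultrafilter \<omega> \<and> (\<forall>n. c n \<in> X) \<and> (\<forall>n. 0 < s n) \<and> filterlim s at_top \<omega>"
    and x: "x \<in> cone_points X e \<omega> c s" and y: "y \<in> cone_points X e \<omega> c s"
    and z: "z \<in> cone_points X e \<omega> c s"
  then have \<omega>: "nonprincipal_ultrafilter \<omega>" and c: "\<forall>n. c n \<in> X" and s: "\<forall>n. 0 < s n"
    and s_lim: "filterlim s at_top \<omega>" and nb: "\<omega> \<noteq> bot"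
    unfolding nonprincipal_ultrafilter_def by blast+
  obtain Lxy where Lxy: "((\<lambda>n. e (x n) (y n) / s n) \<longlongrightarrow> Lxy) \<omega>"
    using cone_distance_convergent[OF e \<omega> c s x y] by blast
  obtain Lxz where Lxz: "((\<lambda>n. e (x n) (z n) / s n) \<longlongrightarrow> Lxz) \<omega>"
    using cone_distance_convergent[OF e \<omega> c s x z] by blast
  obtain Lyz where Lyz: "((\<lambda>n. e (y n) (z n) / s n) \<longlongrightarrow> Lyz) \<omega>"
    using cone_distance_convergent[OF e \<omega> c s y z] by blast
  have "((\<lambda>n. K / s n) \<longlongrightarrow> 0) \<omega>"
    by (rule tendsto_divide_0[OF tendsto_const filterlim_at_top_imp_at_infinity[OF s_lim]])
  then have "((\<lambda>n. max (e (x n) (z n) / s n) (e (y n) (z n) / s n) + K / s n)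
          \<longlongrightarrow> max Lxz Lyz + 0) \<omega>"
    by (rule tendsto_add[OF tendsto_max[OF Lxz Lyz]])
  moreover have "e (x n) (y n) / s n \<le> max (e (x n) (z n) / s n) (e (y n) (z n) / s n) + K / s n" for n
  proof -
    have sn: "0 < s n" using s by blast
    have "x n \<in> X" "y n \<in> X" "z n \<in> X" using x y z unfolding cone_points_def by blast+
    then have "e (x n) (y n) \<le> max (e (x n) (z n)) (e (y n) (z n)) + K"
      using ultra unfolding coarse_ultrametric_def by blast
    then have "e (x n) (y n) / s n \<le> (max (e (x n) (z n)) (e (y n) (z n)) + K) / s n"
      using sn by (simp add: divide_right_mono)
    then show ?thesis
      using sn by (simp add: add_divide_distrib max_divide_distrib_right)
  qed
  ultimately have "Lxy \<le> max Lxz Lyz"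
    using tendsto_le[OF nb _ Lxy] by (simp add: always_eventually)
  then show "Lim \<omega> (\<lambda>n. e (x n) (y n) / s n)
             \<le> max (Lim \<omega> (\<lambda>n. e (x n) (z n) / s n)) (Lim \<omega> (\<lambda>n. e (y n) (z n) / s n))"
    using tendsto_Lim[OF nb Lxy] tendsto_Lim[OF nb Lxz] tendsto_Lim[OF nb Lyz] by simp
qed

section \<open>The gauge metric\<close>

definition gauge_metric :: "(nat \<Rightarrow> real) \<Rightarrow> ('a \<Rightarrow> 'a \<Rightarrow> real) \<Rightarrow> 'a \<Rightarrow> 'a \<Rightarrow> real" where
  "gauge_metric T d x y = scale_gauge T (d x y)"

lemma gauge_metric_metric:
  assumes T: "scale_sequence T" and d: "metric_on X d"
  shows "metric_on X (gauge_metric T d)"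
  unfolding metric_on_def gauge_metric_def
proof (intro conjI ballI)
  fix x y assume "x \<in> X" "y \<in> X"
  then have "0 \<le> d x y" "d x y = 0 \<longleftrightarrow> x = y" "d x y = d y x" using metric_onD[OF d] by blast+
  then show "0 \<le> scale_gauge T (d x y)" "scale_gauge T (d x y) = 0 \<longleftrightarrow> x = y"
    "scale_gauge T (d x y) = scale_gauge T (d y x)"
    using scale_gauge_eq_0_iff scale_gauge_nonneg by auto
next
  fix x y z assume "x \<in> X" "y \<in> X" "z \<in> X"
  then have "d x z \<le> d x y + d y z" "0 \<le> d x y" "0 \<le> d y z"
    using metric_on_triangle[OF d] metric_onD(1)[OF d] by blast+
  then show "scale_gauge T (d x z) \<le> scale_gauge T (d x y) + scale_gauge T (d y z)"
    using scale_gauge_mono[OF T] scale_gauge_subadditive[OF T] by (meson order_trans)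
qed

text \<open>The identity is a coarse equivalence, with the gauge itself as both control functions.\<close>
lemma gauge_metric_coarse_equivalence:
  assumes T: "scale_sequence T" and d: "metric_on X d"
  shows "coarse_equivalence X d X (gauge_metric T d) id"
proof -
  have "mono_on {0..} (scale_gauge T)" by (rule mono_onI) (rule scale_gauge_mono[OF T])
  then have "coarse_embedding X d X (gauge_metric T d) id"
    unfolding coarse_embedding_def gauge_metric_def
    using scale_gauge_tendsto_at_top[OF T] by auto
  moreover have "gauge_metric T d y y = 0" if "y \<in> X" for y
  proof -
    have "d y y = 0" using metric_onD(2)[OF d that that] by simp
    then show ?thesis unfolding gauge_metric_def scale_gauge_def by simp
  qed
  then have "\<forall>y\<in>X. \<exists>x\<in>X. gauge_metric T d (id x) y \<le> 0" by force
  ultimately show ?thesis unfolding coarse_equivalence_def by blast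
qed

lemma gauge_metric_coarse_ultrametric:
  assumes T: "scale_sequence T" and d: "metric_on X d"
  shows "coarse_ultrametric X (gauge_metric T d) 1"
  unfolding coarse_ultrametric_def gauge_metric_def
proof (intro ballI)
  fix x y z assume "x \<in> X" "y \<in> X" "z \<in> X"
  then have "d x y \<le> d x z + d z y" "d z y = d y z" "0 \<le> d x z" "0 \<le> d y z"
    using metric_on_triangle[OF d] metric_onD(1,3)[OF d] by blast+
  then have "d x y \<le> 2 * max (d x z) (d y z)" "0 \<le> max (d x z) (d y z)" by linarith+
  then have "scale_gauge T (d x y) \<le> scale_gauge T (max (d x z) (d y z)) + 1"
    using scale_gauge_mono[OF T] scale_gauge_double[OF T] by (meson order_trans)
  then show "scale_gauge T (d x y) \<le> max (scale_gauge T (d x z)) (scale_gauge T (d y z)) + 1"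
    by (simp add: scale_gauge_max[OF T])
qed

text \<open>If T outruns an n-dimensional control function of d, then s + 3 is an n-dimensional
  control function of the gauge metric: use the d-covers at scale T (nat \<lceil>s\<rceil>).\<close>
lemma gauge_metric_asdim_AN_le:
  assumes T: "scale_sequence T" and D: "control_function X d n D"
    and outrun: "\<forall>i. D (T i) < T (Suc i)"
  shows "asdim_AN_le X (gauge_metric T d) n"
proof -
  have "control_function X (gauge_metric T d) n (\<lambda>s. 1 * s + 3)"
  proof (rule control_function_transfer[OF D])
    fix s :: real assume "0 < s"
    let ?m = "nat \<lceil>s\<rceil>"
    show "\<exists>s'>0. (\<forall>a\<in>X. \<forall>b\<in>X. gauge_metric T d a b < s \<longrightarrow> d a b < s') \<and>
                     (\<forall>a\<in>X. \<forall>b\<in>X. d a b \<le> D s' \<longrightarrow> gauge_metric T d a b \<le> 1 * s + 3)"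
    proof (intro exI[of _ "T ?m"] conjI ballI impI)
      show "0 < T ?m" by (rule scale_sequence_pos[OF T])
      fix a b
      show "d a b < T ?m" if "gauge_metric T d a b < s"
        using that scale_gauge_bound[OF T, of "d a b" s] unfolding gauge_metric_def by simp
      show "gauge_metric T d a b \<le> 1 * s + 3" if "d a b \<le> D (T ?m)"
      proof -
        have "d a b < T (Suc ?m)" using that outrun by (meson order_le_less_trans)
        then have "scale_index T (d a b) \<le> Suc ?m" by (rule scale_index_le)
        then show ?thesis using scale_gauge_le_index[of T "d a b"] \<open>0 < s\<close>
          unfolding gauge_metric_def by linarith
      qed
    qed
  qed (auto intro: mono_onI)
  then show ?thesis unfolding asdim_AN_le_def by (meson zero_less_one)
qed

text \<open>Conversely a linear control function C s + k of the gauge metric gives the control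
  function s \<mapsto> T (nat \<lceil>C (g s + 1) + k\<rceil>) of d.\<close>
lemma asdim_le_of_gauge_metric_asdim_AN_le:
  assumes T: "scale_sequence T" and "asdim_AN_le X (gauge_metric T d) m"
  shows "asdim_le X d m"
proof -
  obtain C k where "C > 0" and CF: "control_function X (gauge_metric T d) m (\<lambda>s. C * s + k)"
    using assms(2) unfolding asdim_AN_le_def by blast
  define E where "E s = T (nat \<lceil>C * (scale_gauge T s + 1) + k\<rceil>)" for s
  have "control_function X d m E"
  proof (rule control_function_transfer[OF CF])
    show "mono_on {0<..} E" unfolding E_def
      using \<open>C > 0\<close> scale_gauge_mono[OF T]
      by (intro mono_onI scale_sequence_mono[OF T] nat_mono ceiling_mono) auto
    show "\<forall>s>0. 0 \<le> E s" unfolding E_def using scale_sequence_pos[OF T] less_imp_le by blast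
    fix s :: real assume "0 < s"
    have "d a b < s \<Longrightarrow> gauge_metric T d a b < scale_gauge T s + 1" for a b
      using scale_gauge_mono[OF T, of "d a b" s] unfolding gauge_metric_def by simp
    moreover have "gauge_metric T d a b \<le> C * (scale_gauge T s + 1) + k \<Longrightarrow> d a b \<le> E s" for a b
      using scale_gauge_bound[OF T] unfolding gauge_metric_def E_def by (meson less_imp_le)
    ultimately show "\<exists>s'>0. (\<forall>a\<in>X. \<forall>b\<in>X. d a b < s \<longrightarrow> gauge_metric T d a b < s') \<and>
        (\<forall>a\<in>X. \<forall>b\<in>X. gauge_metric T d a b \<le> C * s' + k \<longrightarrow> d a b \<le> E s)"
      using scale_gauge_nonneg[of T s] by (intro exI[of _ "scale_gauge T s + 1"]) auto
  qed
  then show ?thesis unfolding asdim_le_def by blast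
qed

text \<open>The gauge only depends on distances, so it preserves left invariance; and gauge
  balls are distance balls of radius T (nat \<lceil>r\<rceil>), so it preserves properness.\<close>
lemma gauge_metric_proper_left_invariant:
  assumes T: "scale_sequence T" and d: "proper_left_invariant_metric G d"
  shows "proper_left_invariant_metric G (gauge_metric T d)"
proof -
  have metric: "metric_on (carrier G) d"
    and invariant: "\<forall>g\<in>carrier G. \<forall>h\<in>carrier G. \<forall>k\<in>carrier G. d (g \<otimes>\<^bsub>G\<^esub> h) (g \<otimes>\<^bsub>G\<^esub> k) = d h k"
    and proper: "\<forall>x\<in>carrier G. \<forall>r. finite {y\<in>carrier G. d x y \<le> r}"
    using d unfolding proper_left_invariant_metric_def by blast+
  have "finite {y \<in> carrier G. gauge_metric T d x y \<le> r}" if "x \<in> carrier G" for x r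
  proof (rule finite_subset)
    show "{y \<in> carrier G. gauge_metric T d x y \<le> r} \<subseteq> {y \<in> carrier G. d x y \<le> T (nat \<lceil>r\<rceil>)}"
      using scale_gauge_bound[OF T] unfolding gauge_metric_def by (auto intro: less_imp_le)
    show "finite {y \<in> carrier G. d x y \<le> T (nat \<lceil>r\<rceil>)}" using proper that by blast
  qed
  then show ?thesis
    using gauge_metric_metric[OF T metric] invariant
    unfolding proper_left_invariant_metric_def gauge_metric_def by simp
qed

lemma gauge_metric_exists:
  assumes d: "metric_on X d" and "asdim X d < \<infinity>"
  obtains T where "scale_sequence T" "metric_on X (gauge_metric T d)"
    "coarse_equivalence X d X (gauge_metric T d) id"
    "asdim_AN X (gauge_metric T d) = asdim X d"
    "all_cones_ultrametric X (gauge_metric T d)"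
proof -
  obtain n D where n: "asdim X d = enat n" and D: "control_function X d n D"
    using asdim_finite_witness[OF assms(2)] .
  obtain T where T: "scale_sequence T" and outrun: "\<forall>i. D (T i) < T (Suc i)"
    using scale_sequence_outrunning by blast
  have "asdim_AN X (gauge_metric T d) = asdim X d"
    using asdim_AN_eq_asdim[OF n gauge_metric_asdim_AN_le[OF T D outrun]]
      asdim_le_of_gauge_metric_asdim_AN_le[OF T] by blast
  then show ?thesis
    using that T gauge_metric_metric[OF T d] gauge_metric_coarse_equivalence[OF T d]
      coarse_ultrametric_cones[OF _ gauge_metric_coarse_ultrametric[OF T d]] by blast
qed

theorem mainTheorem7:
  fixes X :: "'a set" and G :: "('b, 'c) monoid_scheme"
  shows
  "(\<forall>d. metric_on X d \<and> asdim X d < \<infinity> \<longrightarrow>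
      (\<exists>d'. metric_on X d' \<and> coarse_equivalence X d X d' id \<and>
            asdim_AN X d' = asdim X d \<and> all_cones_ultrametric X d')) \<and>
   (\<forall>d. group G \<and> countable (carrier G) \<and> proper_left_invariant_metric G d \<and>
        asdim (carrier G) d < \<infinity> \<longrightarrow>
      (\<exists>d'. proper_left_invariant_metric G d' \<and>
            coarse_equivalence (carrier G) d (carrier G) d' id \<and>
            asdim_AN (carrier G) d' = asdim (carrier G) d \<and>
            all_cones_ultrametric (carrier G) d'))"
proof (intro conjI allI impI)
  fix d assume "metric_on X d \<and> asdim X d < \<infinity>"
  then show "\<exists>d'. metric_on X d' \<and> coarse_equivalence X d X d' id \<and>
                  asdim_AN X d' = asdim X d \<and> all_cones_ultrametric X d'"
    by (metis gauge_metric_exists)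
next
  fix d assume H: "group G \<and> countable (carrier G) \<and> proper_left_invariant_metric G d \<and>
                   asdim (carrier G) d < \<infinity>"
  then have "metric_on (carrier G) d" unfolding proper_left_invariant_metric_def by blast
  then obtain T where "scale_sequence T"
    "coarse_equivalence (carrier G) d (carrier G) (gauge_metric T d) id"
    "asdim_AN (carrier G) (gauge_metric T d) = asdim (carrier G) d"
    "all_cones_ultrametric (carrier G) (gauge_metric T d)"
    using gauge_metric_exists H by metis
  then show "\<exists>d'. proper_left_invariant_metric G d' \<and>
                  coarse_equivalence (carrier G) d (carrier G) d' id \<and>
                  asdim_AN (carrier G) d' = asdim (carrier G) d \<and>
                  all_cones_ultrametric (carrier G) d'"
    using gauge_metric_proper_left_invariant H by blast
qed

end
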